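(* Let $p\ge 2$ and let $a,b\in\mathbb{F}_p$ be nonzero binary floating-point numbers of precision $p$ such that $\mathrm{ufp}(a)\le \mathrm{ufp}(b)$ and $\mathrm{uls}(a)\ge \mathrm{ulp}(b)$. Compute $$s=\circ_1(a+b),\qquad t=\circ_3\bigl(b-\circ_2(s-a)\bigr),$$ where each of $\circ_1,\circ_2,\circ_3$ is a faithful rounding. The three roundings may be different from one another, i.e. each independently rounds down or up. Then $s+t=a+b$.
   Context: $\mathbb{F}_p$ denotes the set of radix-2 floating-point numbers of precision $p$ with unbounded exponent range, so there is no underflow or overflow. Every nonzero $x\in\mathbb{F}_p$ can be written as $x=\pm M\cdot 2^{e}$ with $M,e\in\mathbb{Z}$ and $2^{p-1}\le M<2^p$. For such $x$: - $\mathrm{ufp}(x)=2^{\lfloor\log_2|x|\rfloor}$ is the unit in the first place; - $\mathrm{ulp}(x)=2^{1-p}\,\mathrm{ufp}(x)$ is the unit in the last place; - $\mathrm{uls}(x)$ is the unit in the last significant place, i.e. the largest power of $2$ dividing $x$. A faithful rounding $\circ(y)$ of a real number $y$ is any element of $\{\mathrm{RD}(y),\mathrm{RU}(y)\}$, where $\mathrm{RD}$ and $\mathrm{RU}$ are rounding toward $-\infty$ and toward $+\infty$. In particular $\circ(y)=y$ whenever $y\in\mathbb{F}_p$. The displayed computation is the Fast2Sum algorithm with faithful roundings. *)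

theory Defs
  imports Complex_Main
begin

definition fp :: "nat \<Rightarrow> real set" where
  "fp p = {x. x = 0 \<or> (\<exists>M e :: int. 2^(p-1) \<le> M \<and> M < 2^p \<and>
                 (x = of_int M * 2 powi e \<or> x = - (of_int M * 2 powi e)))}"

definition ufp :: "real \<Rightarrow> real" where
  "ufp x = 2 powi \<lfloor>log 2 \<bar>x\<bar>\<rfloor>"

definition ulp :: "nat \<Rightarrow> real \<Rightarrow> real" where
  "ulp p x = 2 powi (1 - int p) * ufp x"

definition uls :: "real \<Rightarrow> real" where
  "uls x = (GREATEST u. \<exists>k :: int. u = 2 powi k \<and> (\<exists>n :: int. x = of_int n * u))"

definition RD :: "nat \<Rightarrow> real \<Rightarrow> real" where
  "RD p y = (GREATEST x. x \<in> fp p \<and> x \<le> y)"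

definition RU :: "nat \<Rightarrow> real \<Rightarrow> real" where
  "RU p y = (LEAST x. x \<in> fp p \<and> y \<le> x)"

definition faithful :: "nat \<Rightarrow> real \<Rightarrow> real \<Rightarrow> bool" where
  "faithful p y r \<longleftrightarrow> r = RD p y \<or> r = RU p y"

end

(*
  Put w = ulp b. Both a and b are integer multiples of w of magnitude below 2^p w: for b this
  is its normal form, for a it follows from uls a >= w and ufp a <= ufp b. Hence a + b = n w with
  |n| <= 2^(p+1). Above 2^p w the floating-point grid has spacing 2w, so every faithful rounding of
  n w is some m w with |m - n| <= 1. Then s - a = (m - n_a) w and b - (s - a) = (n - m) w have
  integer coefficients of magnitude at most 2^p, so they are floating-point numbers, the second
  and third roundings are exact, and s + t = a + b.
*)
theory Submission
  imports Defs
begin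

lemma two_powi_le_iff [simp]: "(2::real) powi a \<le> 2 powi b \<longleftrightarrow> a \<le> b"
proof
  show "(2::real) powi a \<le> 2 powi b \<Longrightarrow> a \<le> b"
    using power_int_strict_increasing[of b a "2::real"] by fastforce
qed (simp add: power_int_increasing)

lemma two_powi_less_iff [simp]: "(2::real) powi a < 2 powi b \<longleftrightarrow> a < b"
  by (meson not_le two_powi_le_iff)

lemma multiple_of_coarser_powi:
  assumes "g \<le> k" "x = of_int n * (2::real) powi k"
  shows "\<exists>n'::int. x = of_int n' * 2 powi g"
proof -
  obtain d :: nat where d: "k = g + int d" using assms(1) by (metis zle_iff_zadd)
  have "x = of_int (n * 2 ^ d) * 2 powi g"
    using assms(2) by (simp add: d power_int_add)
  then show ?thesis ..
qed

lemma ufp_eqI: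
  assumes "2 powi k \<le> \<bar>x\<bar>" "\<bar>x\<bar> < 2 powi (k + 1)"
  shows "ufp x = 2 powi k"
proof -
  have "(0::real) < 2 powi k" by simp
  then have "\<bar>x\<bar> > 0" using assms(1) by linarith
  then have "real_of_int k \<le> log 2 \<bar>x\<bar>" "log 2 \<bar>x\<bar> < real_of_int k + 1"
    using assms powr_real_of_int'[of 2 k] powr_real_of_int'[of 2 "k + 1"]
    by (simp_all add: le_log_iff log_less_iff)
  then have "\<lfloor>log 2 \<bar>x\<bar>\<rfloor> = k" by (simp add: floor_eq_iff)
  then show ?thesis unfolding ufp_def by simp
qed

lemma abs_less_two_ufp:
  assumes "x \<noteq> 0" shows "\<bar>x\<bar> < 2 * ufp x"
proof -
  have "\<bar>x\<bar> = 2 powr log 2 \<bar>x\<bar>" using assms by simp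
  also have "\<dots> < 2 powr (\<lfloor>log 2 \<bar>x\<bar>\<rfloor> + 1)" by (intro powr_less_mono) linarith+
  also have "\<dots> = 2 * ufp x" unfolding ufp_def by (simp add: powr_add powr_real_of_int')
  finally show ?thesis .
qed

lemma ulp_eq_two_powi: "ulp p x = 2 powi (1 - int p + \<lfloor>log 2 \<bar>x\<bar>\<rfloor>)"
  unfolding ulp_def ufp_def by (simp add: power_int_add)

lemma fp_uminus: "x \<in> fp p \<Longrightarrow> - x \<in> fp p"
  unfolding fp_def mem_Collect_eq by (metis minus_minus neg_equal_0_iff_equal)

lemma fp_nonzero_repr:
  assumes "x \<in> fp p" "x \<noteq> 0"
  obtains n e :: int where "2 ^ (p - 1) \<le> \<bar>n\<bar>" "\<bar>n\<bar> < 2 ^ p" "x = of_int n * 2 powi e"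
proof -
  obtain M e :: int where M: "2 ^ (p - 1) \<le> M" "M < 2 ^ p"
    and "x = of_int M * 2 powi e \<or> x = of_int (- M) * 2 powi e"
    using assms unfolding fp_def by auto
  moreover have "(0::int) \<le> 2 ^ (p - 1)" by simp
  then have "\<bar>M\<bar> = M" "\<bar>- M\<bar> = M" using M(1) by linarith+
  ultimately show ?thesis using that by metis
qed

lemma fp_eq_int_mult_ulp:
  assumes "p \<ge> 1" "x \<in> fp p"
  obtains n :: int where "x = of_int n * ulp p x" "\<bar>n\<bar> < 2 ^ p"
proof (cases "x = 0")
  case True
  then show ?thesis using that[of 0] by simp
next
  case False
  then obtain n e :: int where n: "2 ^ (p - 1) \<le> \<bar>n\<bar>" "\<bar>n\<bar> < 2 ^ p" "x = of_int n * 2 powi e"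
    using fp_nonzero_repr assms(2) by blast
  have "(2::real) powi (e + int p - 1) = 2 powi (int (p - 1) + e)"
    using assms(1) by (intro arg_cong[of _ _ "power_int 2"]) arith
  also have "\<dots> = 2 ^ (p - 1) * 2 powi e"
    by (subst power_int_add) (simp_all only: power_int_of_nat, simp)
  also have "\<dots> \<le> \<bar>x\<bar>"
    using n(1,3) by (simp add: abs_mult flip: of_int_abs)
  finally have lower: "(2::real) powi (e + int p - 1) \<le> \<bar>x\<bar>" .
  have "\<bar>x\<bar> < 2 ^ p * 2 powi e"
    using n(2,3) by (simp add: abs_mult flip: of_int_abs)
  also have "\<dots> = 2 powi (e + int p - 1 + 1)" by (simp add: power_int_add)
  finally have "ufp x = 2 powi (e + int p - 1)" using ufp_eqI[OF lower] by simp
  then have "ulp p x = 2 powi e" unfolding ulp_def by (simp flip: power_int_add)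
  then show ?thesis using that n by simp
qed

lemma pos_int_normal_form:
  fixes m :: int
  assumes "p \<ge> 1" "0 < m" "m \<le> 2 ^ p"
  shows "\<exists>M e :: int. 2 ^ (p - 1) \<le> M \<and> M < 2 ^ p \<and> real_of_int m = of_int M * 2 powi e"
  using assms(2,3)
proof (induction "nat (2 ^ p - m)" arbitrary: m rule: less_induct)
  case less
  have pow: "(2::int) ^ p = 2 * 2 ^ (p - 1)"
    using assms(1) by (cases p) simp_all
  consider "m = 2 ^ p" | "2 ^ (p - 1) \<le> m" "m < 2 ^ p" | "m < 2 ^ (p - 1)"
    using less.prems(2) by linarith
  then show ?case
  proof cases
    case 1
    moreover have "(2::int) ^ (p - 1) < 2 ^ p" using pow by simp
    ultimately show ?thesis using pow by (intro exI[of _ "2 ^ (p - 1)"] exI[of _ 1]) simp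
  next
    case 2
    then show ?thesis by (intro exI[of _ m] exI[of _ 0]) simp
  next
    case 3
    then obtain M e :: int where "2 ^ (p - 1) \<le> M" "M < 2 ^ p" "real_of_int (2 * m) = of_int M * 2 powi e"
      using less.hyps[of "2 * m"] less.prems(1) pow by auto
    moreover have "real_of_int m = of_int M * 2 powi (e - 1) \<longleftrightarrow> real_of_int (2 * m) = of_int M * 2 powi e"
      by (simp add: power_int_diff mult.commute)
    ultimately show ?thesis by blast
  qed
qed

lemma int_mult_powi_in_fp:
  fixes n f :: int
  assumes "p \<ge> 1" "\<bar>n\<bar> \<le> 2 ^ p"
  shows "of_int n * 2 powi f \<in> fp p"
proof (cases "n = 0")
  case True
  then show ?thesis by (simp add: fp_def)
next
  case False
  then obtain M e :: int where M: "2 ^ (p - 1) \<le> M" "M < 2 ^ p" "real_of_int \<bar>n\<bar> = of_int M * 2 powi e"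
    using pos_int_normal_form[OF assms(1), of "\<bar>n\<bar>"] assms(2) by auto
  have "of_int n * 2 powi f = of_int M * (2::real) powi (e + f) \<or> of_int n * 2 powi f = - (of_int M * (2::real) powi (e + f))"
    using M(3) by (cases "n \<ge> 0") (simp_all add: power_int_add, metis minus_mult_left minus_equation_iff mult.assoc)
  then show ?thesis unfolding fp_def using M(1,2) by blast
qed

lemma fp_large_even_multiple:
  assumes "x \<in> fp p" "2 ^ p * 2 powi f \<le> \<bar>x\<bar>"
  obtains k :: int where "x = of_int (2 * k) * 2 powi f"
proof -
  have "(0::real) < 2 ^ p * 2 powi f" by simp
  then have "x \<noteq> 0" using assms(2) by (metis abs_zero not_le)
  then obtain n e :: int where n: "\<bar>n\<bar> < 2 ^ p" "x = of_int n * 2 powi e"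
    using fp_nonzero_repr assms(1) by metis
  have "\<bar>x\<bar> < 2 ^ p * 2 powi e"
    using n by (simp add: abs_mult flip: of_int_abs)
  then have "2 ^ p * (2::real) powi f < 2 ^ p * 2 powi e"
    using assms(2) by linarith
  then have "f + 1 \<le> e" by simp
  then obtain k :: int where "x = of_int k * 2 powi (f + 1)"
    using multiple_of_coarser_powi n(2) by blast
  then show ?thesis using that[of k] by (simp add: power_int_add)
qed

lemma int_Sup_mem:
  fixes X :: "int set"
  assumes "X \<noteq> {}" "bdd_above X"
  shows "Sup X \<in> X"
proof -
  obtain x where "x \<in> X" "Sup X - 1 < x" using less_cSupE[of "Sup X - 1" X] assms(1) by auto
  moreover have "x \<le> Sup X" using cSup_upper[OF \<open>x \<in> X\<close> assms(2)] .
  ultimately have "x = Sup X" by linarith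
  with \<open>x \<in> X\<close> show ?thesis by simp
qed

lemma uls_fp_nonzero:
  assumes "x \<in> fp p" "x \<noteq> 0"
  obtains k n :: int where "uls x = 2 powi k" "x = of_int n * 2 powi k"
proof -
  define K where "K = {k :: int. \<exists>n :: int. x = of_int n * 2 powi k}"
  have "K \<noteq> {}" using fp_nonzero_repr[OF assms] unfolding K_def by blast
  moreover have "k \<le> \<lfloor>log 2 \<bar>x\<bar>\<rfloor>" if "k \<in> K" for k
  proof -
    obtain n :: int where n: "x = of_int n * 2 powi k" using \<open>k \<in> K\<close> unfolding K_def by blast
    then have "1 \<le> \<bar>real_of_int n\<bar>" using assms(2) by auto
    then have "2 powi k \<le> \<bar>x\<bar>" using n by (simp add: abs_mult)
    also have "\<dots> < 2 powi (\<lfloor>log 2 \<bar>x\<bar>\<rfloor> + 1)"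
      using abs_less_two_ufp[OF assms(2)] unfolding ufp_def by (simp add: power_int_add)
    finally show ?thesis by simp
  qed
  then have "bdd_above K" by (rule bdd_aboveI)
  ultimately have "Sup K \<in> K" and le_Sup: "\<And>k. k \<in> K \<Longrightarrow> k \<le> Sup K"
    by (auto intro: int_Sup_mem cSup_upper)
  then obtain n :: int where n: "x = of_int n * 2 powi Sup K" unfolding K_def by blast
  have "uls x = 2 powi Sup K"
    unfolding uls_def
  proof (rule Greatest_equality)
    show "\<exists>k. 2 powi Sup K = 2 powi k \<and> (\<exists>n :: int. x = of_int n * 2 powi Sup K)"
      using n by blast
  next
    fix u assume "\<exists>k. u = 2 powi k \<and> (\<exists>n :: int. x = of_int n * u)"
    then obtain k where "u = 2 powi k" "k \<in> K" unfolding K_def by auto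
    then show "u \<le> 2 powi Sup K" using le_Sup by simp
  qed
  then show ?thesis using that n by blast
qed

lemma fp_multiple_of_powi_le_uls:
  assumes "x \<in> fp p" "x \<noteq> 0" "2 powi g \<le> uls x"
  obtains n :: int where "x = of_int n * 2 powi g"
proof -
  obtain k n :: int where "uls x = 2 powi k" "x = of_int n * 2 powi k"
    using uls_fp_nonzero[OF assms(1,2)] .
  moreover from this have "g \<le> k" using assms(3) by simp
  ultimately show ?thesis using multiple_of_coarser_powi that by blast
qed

lemma RD_eqI:
  assumes "x \<in> fp p" "x \<le> y" "\<And>z. z \<in> fp p \<Longrightarrow> z \<le> y \<Longrightarrow> z \<le> x"
  shows "RD p y = x"
  unfolding RD_def using assms by (intro Greatest_equality) auto

lemma RU_eqI:
  assumes "x \<in> fp p" "y \<le> x" "\<And>z. z \<in> fp p \<Longrightarrow> y \<le> z \<Longrightarrow> x \<le> z"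
  shows "RU p y = x"
  unfolding RU_def using assms by (intro Least_equality) auto

lemma RU_eq_uminus:
  assumes "x \<in> fp p" "x \<le> - y" "\<And>z. z \<in> fp p \<Longrightarrow> z \<le> - y \<Longrightarrow> z \<le> x"
  shows "RU p y = - x"
proof (rule RU_eqI)
  fix z assume "z \<in> fp p" "y \<le> z"
  then show "- x \<le> z" using assms(3)[of "- z"] fp_uminus by fastforce
qed (use assms(1,2) fp_uminus in auto)

lemma faithful_fp:
  assumes "y \<in> fp p" "faithful p y r"
  shows "r = y"
proof -
  have "RD p y = y" "RU p y = y" by (auto intro: RD_eqI RU_eqI assms(1))
  then show ?thesis using assms(2) unfolding faithful_def by auto
qed

lemma fp_le_even_floor:
  assumes "p \<ge> 1" "2 ^ p \<le> \<bar>n\<bar>" "z \<in> fp p" "z \<le> of_int n * 2 powi f"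
  shows "z \<le> of_int (2 * (n div 2)) * 2 powi f"
proof (cases "2 ^ p * 2 powi f \<le> \<bar>z\<bar>")
  case True
  then obtain k :: int where k: "z = of_int (2 * k) * 2 powi f"
    using fp_large_even_multiple assms(3) by blast
  then have "2 * k \<le> n" using assms(4) by simp
  then have "2 * k \<le> 2 * (n div 2)" by presburger
  then show ?thesis using k by simp
next
  case False
  have pow: "(2::int) ^ p = 2 * 2 ^ (p - 1)"
    using assms(1) by (cases p) simp_all
  have "n > 0"
  proof (rule ccontr)
    assume "\<not> n > 0"
    then have "n \<le> - (2 ^ p)" using assms(2) by linarith
    then have "real_of_int n \<le> - (2 ^ p)" using of_int_le_iff[of n "- (2 ^ p)"] by simp
    then have "of_int n * 2 powi f \<le> - (2 ^ p) * (2::real) powi f"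
      by (rule mult_right_mono) simp
    then show False using False assms(4) by linarith
  qed
  then have "2 ^ p \<le> 2 * (n div 2)" using assms(2) pow by presburger
  then have "2 ^ p \<le> real_of_int (2 * (n div 2))" using of_int_le_iff[of "2 ^ p" "2 * (n div 2)"] by simp
  then have "2 ^ p * (2::real) powi f \<le> of_int (2 * (n div 2)) * 2 powi f"
    by (rule mult_right_mono) simp
  then show ?thesis using False by linarith
qed

lemma faithful_int_mult_powi:
  assumes "p \<ge> 1" "\<bar>n\<bar> \<le> 2 ^ (p + 1)" "faithful p (of_int n * 2 powi f) r"
  obtains m :: int where "r = of_int m * 2 powi f" "\<bar>m - n\<bar> \<le> 1"
proof (cases "\<bar>n\<bar> \<le> 2 ^ p")
  case True
  then have "r = of_int n * 2 powi f"
    using faithful_fp int_mult_powi_in_fp assms(1,3) by blast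
  then show ?thesis using that by simp
next
  case False
  define w :: real where "w = 2 powi f"
  have even_in_fp: "of_int (2 * (k div 2)) * w \<in> fp p" if "\<bar>k\<bar> \<le> 2 ^ (p + 1)" for k
  proof -
    have "\<bar>k div 2\<bar> \<le> 2 ^ p" using that by simp
    then show ?thesis
      using int_mult_powi_in_fp[OF assms(1), of "k div 2" "f + 1"] by (simp add: w_def power_int_add mult_ac)
  qed
  have even_below: "of_int (2 * (k div 2)) * w \<le> of_int k * w" for k
  proof -
    have "2 * (k div 2) \<le> k" by presburger
    then show ?thesis unfolding w_def by (intro mult_right_mono) (simp only: of_int_le_iff, simp)
  qed
  have even_floor: "z \<le> of_int (2 * (k div 2)) * w" if "2 ^ p \<le> \<bar>k\<bar>" "z \<in> fp p" "z \<le> of_int k * w" for k z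
    using fp_le_even_floor[OF assms(1)] that unfolding w_def by blast
  have "RD p (of_int n * w) = of_int (2 * (n div 2)) * w"
    using False assms(2) by (intro RD_eqI even_in_fp even_below even_floor) simp_all
  moreover have "RU p (of_int n * w) = - (of_int (2 * (- n div 2)) * w)"
    using False assms(2) by (intro RU_eq_uminus even_in_fp even_floor) (simp_all add: even_below[of "- n", simplified])
  moreover have "\<bar>2 * (n div 2) - n\<bar> \<le> 1" "\<bar>- (2 * (- n div 2)) - n\<bar> \<le> 1" by linarith+
  ultimately show ?thesis
    using assms(3) that unfolding faithful_def w_def by (metis minus_mult_left of_int_minus)
qed

theorem lemma2:
  fixes p :: nat and a b s u t :: real
  assumes "p \<ge> 2"
    and "a \<in> fp p" and "b \<in> fp p" and "a \<noteq> 0" and "b \<noteq> 0"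
    and "ufp a \<le> ufp b"
    and "uls a \<ge> ulp p b"
    and "faithful p (a + b) s"
    and "faithful p (s - a) u"
    and "faithful p (b - u) t"
  shows "s + t = a + b"
proof -
  have p: "p \<ge> 1" using assms(1) by simp
  define f where "f = 1 - int p + \<lfloor>log 2 \<bar>b\<bar>\<rfloor>"
  have ulp_b: "ulp p b = 2 powi f" unfolding f_def by (rule ulp_eq_two_powi)
  obtain nb :: int where nb: "b = of_int nb * 2 powi f" "\<bar>nb\<bar> < 2 ^ p"
    using fp_eq_int_mult_ulp[OF p assms(3)] ulp_b by metis
  obtain na :: int where na: "a = of_int na * 2 powi f"
    using fp_multiple_of_powi_le_uls[OF assms(2,4)] assms(7) ulp_b by metis
  have "\<bar>a\<bar> < 2 * ufp b" using abs_less_two_ufp[OF assms(4)] assms(6) by linarith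
  also have "\<dots> = 2 ^ p * 2 powi f"
    using ulp_b unfolding ulp_def by (simp add: power_int_diff field_simps)
  finally have "\<bar>na\<bar> < 2 ^ p"
    using na by (simp add: abs_mult flip: of_int_abs)
  then have "\<bar>na + nb\<bar> \<le> 2 ^ (p + 1)" using nb(2) by simp
  moreover have "a + b = of_int (na + nb) * 2 powi f" using na nb(1) by (simp add: algebra_simps)
  ultimately obtain m :: int where m: "s = of_int m * 2 powi f" "\<bar>m - (na + nb)\<bar> \<le> 1"
    using faithful_int_mult_powi[OF p] assms(8) by metis
  have "\<bar>m - na\<bar> \<le> 2 ^ p" "\<bar>na + nb - m\<bar> \<le> 2 ^ p" using m(2) nb(2) by linarith+
  note exact = faithful_fp[OF int_mult_powi_in_fp[OF p this(1)]] faithful_fp[OF int_mult_powi_in_fp[OF p this(2)]]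
  have "s - a = of_int (m - na) * 2 powi f" using m(1) na by (simp add: left_diff_distrib)
  then have u: "u = s - a" using exact(1) assms(9) by metis
  then have "b - u = of_int (na + nb - m) * 2 powi f" using m(1) na nb(1) by (simp add: algebra_simps)
  then have "t = b - u" using exact(2) assms(10) by metis
  then show ?thesis using u by simp
qed

end
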